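(* Let $\mathsf{K}$ be a variety, $\mathbf{B}\in\mathsf{K}$, and $\mathbf{A}\leq\mathbf{B}$ full in $\mathsf{K}$. If $\phi$ is a congruence of $\mathbf{A}$ and there exists a congruence $\theta$ of $\mathbf{B}$ with $\theta\neq\mathrm{id}_B$ and $\theta{\upharpoonright}_A\subseteq\phi$, then $\phi=\mathrm{Cg}^{\mathbf{B}}(\phi){\upharpoonright}_A$.
   Context: $\mathrm{Cg}^{\mathbf{B}}(X)$ is the least congruence of $\mathbf{B}$ containing $X\subseteq B\times B$; $\theta{\upharpoonright}_A=\theta\cap(A\times A)$. $\mathbf{A}\leq\mathbf{B}$ is full in $\mathsf{K}$ if it is proper, almost total ($B=\mathrm{Sg}^{\mathbf{B}}(A\cup\{b\})$ for some $b\in B$), and every congruence $\theta\neq\mathrm{id}_B$ of $\mathbf{B}$ relates each $b\in B$ to some $a\in A$. *)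

theory Defs
  imports Main
begin

record ('a, 'f) alg =
  carrier :: "'a set"
  ops :: "'f \<Rightarrow> 'a list \<Rightarrow> 'a"

definition algebra :: "('f \<Rightarrow> nat) \<Rightarrow> ('a, 'f) alg \<Rightarrow> bool" where
  "algebra ar A \<longleftrightarrow>
     (\<forall>f xs. length xs = ar f \<and> set xs \<subseteq> carrier A \<longrightarrow> ops A f xs \<in> carrier A)"

definition subalgebra :: "('f \<Rightarrow> nat) \<Rightarrow> ('a, 'f) alg \<Rightarrow> ('a, 'f) alg \<Rightarrow> bool" where
  "subalgebra ar A B \<longleftrightarrow> algebra ar A \<and> algebra ar B \<and> carrier A \<subseteq> carrier B \<and>
     (\<forall>f xs. length xs = ar f \<and> set xs \<subseteq> carrier A \<longrightarrow> ops A f xs = ops B f xs)"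

definition congruence :: "('f \<Rightarrow> nat) \<Rightarrow> ('a, 'f) alg \<Rightarrow> 'a rel \<Rightarrow> bool" where
  "congruence ar B \<theta> \<longleftrightarrow> equiv (carrier B) \<theta> \<and>
     (\<forall>f xs ys. length xs = ar f \<and> length ys = ar f \<and> list_all2 (\<lambda>x y. (x, y) \<in> \<theta>) xs ys
        \<longrightarrow> (ops B f xs, ops B f ys) \<in> \<theta>)"

definition Sg :: "('f \<Rightarrow> nat) \<Rightarrow> ('a, 'f) alg \<Rightarrow> 'a set \<Rightarrow> 'a set" where
  "Sg ar B X = \<Inter>{S. X \<subseteq> S \<and> S \<subseteq> carrier B \<and>
     (\<forall>f xs. length xs = ar f \<and> set xs \<subseteq> S \<longrightarrow> ops B f xs \<in> S)}"

definition Cg :: "('f \<Rightarrow> nat) \<Rightarrow> ('a, 'f) alg \<Rightarrow> 'a rel \<Rightarrow> 'a rel" where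
  "Cg ar B X = \<Inter>{\<theta>. congruence ar B \<theta> \<and> X \<subseteq> \<theta>}"

definition restr :: "'a rel \<Rightarrow> 'a set \<Rightarrow> 'a rel" where
  "restr \<theta> A = \<theta> \<inter> (A \<times> A)"

text \<open>Terms, evaluation, and varieties as equational classes (Birkhoff).\<close>
datatype ('f, 'v) trm = Var 'v | App 'f "('f, 'v) trm list"

fun wf_trm :: "('f \<Rightarrow> nat) \<Rightarrow> ('f, 'v) trm \<Rightarrow> bool" where
  "wf_trm ar (Var v) = True"
| "wf_trm ar (App f ts) = (length ts = ar f \<and> (\<forall>t\<in>set ts. wf_trm ar t))"

fun eval :: "('a, 'f) alg \<Rightarrow> ('v \<Rightarrow> 'a) \<Rightarrow> ('f, 'v) trm \<Rightarrow> 'a" where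
  "eval B \<sigma> (Var v) = \<sigma> v"
| "eval B \<sigma> (App f ts) = ops B f (map (eval B \<sigma>) ts)"

definition variety :: "('f \<Rightarrow> nat) \<Rightarrow> ('a, 'f) alg set \<Rightarrow> bool" where
  "variety ar K \<longleftrightarrow> (\<exists>E :: (('f, nat) trm \<times> ('f, nat) trm) set.
     (\<forall>(s, t)\<in>E. wf_trm ar s \<and> wf_trm ar t) \<and>
     K = {B. algebra ar B \<and> (\<forall>(s, t)\<in>E. \<forall>\<sigma>. (\<forall>v. \<sigma> v \<in> carrier B) \<longrightarrow> eval B \<sigma> s = eval B \<sigma> t)})"

definition full_in :: "('f \<Rightarrow> nat) \<Rightarrow> ('a, 'f) alg set \<Rightarrow> ('a, 'f) alg \<Rightarrow> ('a, 'f) alg \<Rightarrow> bool" where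
  "full_in ar K A B \<longleftrightarrow> A \<in> K \<and> B \<in> K \<and> subalgebra ar A B \<and>
     carrier A \<subset> carrier B \<and>
     (\<exists>b\<in>carrier B. carrier B = Sg ar B (carrier A \<union> {b})) \<and>
     (\<forall>\<theta>. congruence ar B \<theta> \<and> \<theta> \<noteq> Id_on (carrier B) \<longrightarrow>
        (\<forall>b\<in>carrier B. \<exists>a\<in>carrier A. (b, a) \<in> \<theta>))"

end

theory Submission
  imports Defs
begin

text \<open>The relation \<open>\<theta> O \<phi> O \<theta>\<close> extends \<open>\<phi>\<close> to a congruence of \<open>B\<close>: it is reflexive because
  every \<open>\<theta>\<close>-class meets \<open>A\<close>, transitive because two \<open>\<theta>\<close>-related elements of \<open>A\<close> are already
  \<open>\<phi>\<close>-related, and compatible because \<open>\<theta>\<close> and \<open>\<phi>\<close> are. Its trace on \<open>A\<close> is \<open>\<phi>\<close>, and it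
  contains \<open>Cg\<^sup>B(\<phi>)\<close>, so the trace of \<open>Cg\<^sup>B(\<phi>)\<close> is \<open>\<phi>\<close> as well.\<close>

lemma Cg_upper: "X \<subseteq> Cg ar B X"
  unfolding Cg_def by blast

lemma Cg_least: "congruence ar B \<psi> \<Longrightarrow> X \<subseteq> \<psi> \<Longrightarrow> Cg ar B X \<subseteq> \<psi>"
  unfolding Cg_def by blast

lemma congruenceD_equiv: "congruence ar B \<theta> \<Longrightarrow> equiv (carrier B) \<theta>"
  unfolding congruence_def by blast

lemma congruenceD_compatible:
  assumes "congruence ar B \<theta>" "length xs = ar f" "list_all2 (\<lambda>x y. (x, y) \<in> \<theta>) xs ys"
  shows "(ops B f xs, ops B f ys) \<in> \<theta>"
  using assms list_all2_lengthD unfolding congruence_def by metis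

lemma list_all2_relcomp:
  "list_all2 (\<lambda>x y. (x, y) \<in> R O S) xs ys \<longleftrightarrow>
   (\<exists>zs. list_all2 (\<lambda>x y. (x, y) \<in> R) xs zs \<and> list_all2 (\<lambda>x y. (x, y) \<in> S) zs ys)"
  by (simp add: relcompp_relcomp_eq[symmetric] list.rel_compp relcompp_apply)

lemma list_all2_in_carrier:
  assumes "list_all2 (\<lambda>x y. (x, y) \<in> \<phi>) xs ys" "\<phi> \<subseteq> C \<times> C"
  shows "set xs \<subseteq> C" "set ys \<subseteq> C"
  using assms by (induction rule: list_all2_induct) auto

lemma subalgebraD_ops:
  "subalgebra ar A B \<Longrightarrow> length xs = ar f \<Longrightarrow> set xs \<subseteq> carrier A \<Longrightarrow> ops A f xs = ops B f xs"
  unfolding subalgebra_def by blast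

lemma congruence_subalgebra_compatible:
  assumes sub: "subalgebra ar A B" and \<phi>: "congruence ar A \<phi>"
    and len: "length xs = ar f" and rel: "list_all2 (\<lambda>x y. (x, y) \<in> \<phi>) xs ys"
  shows "(ops B f xs, ops B f ys) \<in> \<phi>"
proof -
  have \<phi>A: "\<phi> \<subseteq> carrier A \<times> carrier A"
    using equiv_type[OF congruenceD_equiv[OF \<phi>]] .
  have "ops A f xs = ops B f xs"
    using subalgebraD_ops[OF sub len list_all2_in_carrier(1)[OF rel \<phi>A]] .
  moreover have "ops A f ys = ops B f ys"
    using len list_all2_lengthD[OF rel] subalgebraD_ops[OF sub _ list_all2_in_carrier(2)[OF rel \<phi>A]]
    by simp
  moreover have "(ops A f xs, ops A f ys) \<in> \<phi>"
    using congruenceD_compatible[OF \<phi> len rel] .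
  ultimately show ?thesis
    by simp
qed

lemma restr_sandwich_subset:
  assumes "trans \<phi>" "\<phi> \<subseteq> C \<times> C" "restr \<theta> C \<subseteq> \<phi>"
  shows "restr (\<theta> O \<phi> O \<theta>) C \<subseteq> \<phi>"
proof
  fix p assume "p \<in> restr (\<theta> O \<phi> O \<theta>) C"
  then obtain x a a' y where p: "p = (x, y)" "x \<in> C" "y \<in> C"
    and xa: "(x, a) \<in> \<theta>" and aa': "(a, a') \<in> \<phi>" and a'y: "(a', y) \<in> \<theta>"
    unfolding restr_def by blast
  have "a \<in> C" "a' \<in> C"
    using aa' assms(2) by auto
  then have "(x, a) \<in> \<phi>" "(a', y) \<in> \<phi>"
    using p(2,3) xa a'y assms(3) by (auto simp: restr_def)
  then show "p \<in> \<phi>"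
    using p(1) aa' assms(1) by (meson transD)
qed

lemma sandwich_congruence:
  assumes sub: "subalgebra ar A B" and \<theta>: "congruence ar B \<theta>" and \<phi>: "congruence ar A \<phi>"
    and meets: "\<And>b. b \<in> carrier B \<Longrightarrow> \<exists>a\<in>carrier A. (b, a) \<in> \<theta>"
    and trace: "restr \<theta> (carrier A) \<subseteq> \<phi>"
  shows "congruence ar B (\<theta> O \<phi> O \<theta>)"
  unfolding congruence_def
proof (intro conjI allI impI)
  have eq\<theta>: "equiv (carrier B) \<theta>" and eq\<phi>: "equiv (carrier A) \<phi>"
    using \<theta> \<phi> congruenceD_equiv by blast+
  then have sym\<theta>: "sym \<theta>" and trans\<theta>: "trans \<theta>" and sym\<phi>: "sym \<phi>" and trans\<phi>: "trans \<phi>"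
    and refl\<phi>: "refl_on (carrier A) \<phi>" and \<phi>A: "\<phi> \<subseteq> carrier A \<times> carrier A"
    by (auto elim: equivE)
  show "equiv (carrier B) (\<theta> O \<phi> O \<theta>)"
  proof (rule equivI)
    show "\<theta> O \<phi> O \<theta> \<subseteq> carrier B \<times> carrier B"
      using equiv_type[OF eq\<theta>] by blast
    show "refl_on (carrier B) (\<theta> O \<phi> O \<theta>)"
    proof (rule refl_onI)
      fix b assume "b \<in> carrier B"
      then obtain a where a: "a \<in> carrier A" "(b, a) \<in> \<theta>"
        using meets by blast
      moreover have "(a, a) \<in> \<phi>"
        using refl\<phi> a(1) by (rule refl_onD)
      moreover have "(a, b) \<in> \<theta>"
        using sym\<theta> a(2) by (rule symD)
      ultimately show "(b, b) \<in> \<theta> O \<phi> O \<theta>"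
        by (intro relcompI)
    qed
    show "sym (\<theta> O \<phi> O \<theta>)"
      using sym\<theta> sym\<phi> by (simp add: sym_conv_converse_eq converse_relcomp O_assoc)
    show "trans (\<theta> O \<phi> O \<theta>)"
    proof (rule transI)
      fix x y z assume "(x, y) \<in> \<theta> O \<phi> O \<theta>" "(y, z) \<in> \<theta> O \<phi> O \<theta>"
      then obtain a1 a2 a3 a4 where h: "(x, a1) \<in> \<theta>" "(a1, a2) \<in> \<phi>" "(a2, y) \<in> \<theta>"
          "(y, a3) \<in> \<theta>" "(a3, a4) \<in> \<phi>" "(a4, z) \<in> \<theta>"
        by blast
      have "(a2, a3) \<in> \<theta>"
        using h(3,4) trans\<theta> by (rule transD[rotated])
      moreover have "a2 \<in> carrier A" "a3 \<in> carrier A"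
        using h(2,5) \<phi>A by blast+
      ultimately have "(a2, a3) \<in> \<phi>"
        using trace unfolding restr_def by blast
      then have "(a1, a4) \<in> \<phi>"
        using h(2,5) trans\<phi> by (meson transD)
      then show "(x, z) \<in> \<theta> O \<phi> O \<theta>"
        using h(1,6) by (intro relcompI)
    qed
  qed
next
  fix f xs ys
  assume args: "length xs = ar f \<and> length ys = ar f \<and> list_all2 (\<lambda>x y. (x, y) \<in> \<theta> O \<phi> O \<theta>) xs ys"
  then obtain as as' where
    xs: "list_all2 (\<lambda>x y. (x, y) \<in> \<theta>) xs as" and as: "list_all2 (\<lambda>x y. (x, y) \<in> \<phi>) as as'"
    and ys: "list_all2 (\<lambda>x y. (x, y) \<in> \<theta>) as' ys"
    unfolding list_all2_relcomp by blast
  have len_as: "length as = ar f"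
    using args list_all2_lengthD[OF xs] by simp
  then have len_as': "length as' = ar f"
    using list_all2_lengthD[OF as] by simp
  have "(ops B f xs, ops B f as) \<in> \<theta>"
    using \<theta> _ xs by (rule congruenceD_compatible) (use args in simp)
  moreover have "(ops B f as, ops B f as') \<in> \<phi>"
    using sub \<phi> len_as as by (rule congruence_subalgebra_compatible)
  moreover have "(ops B f as', ops B f ys) \<in> \<theta>"
    using \<theta> len_as' ys by (rule congruenceD_compatible)
  ultimately show "(ops B f xs, ops B f ys) \<in> \<theta> O \<phi> O \<theta>"
    by (intro relcompI)
qed

lemma sandwich_contains:
  assumes "refl_on C \<theta>" "\<phi> \<subseteq> C \<times> C"
  shows "\<phi> \<subseteq> \<theta> O \<phi> O \<theta>"
proof
  fix p assume p: "p \<in> \<phi>"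
  then obtain x y where xy: "p = (x, y)"
    by fastforce
  then have "(x, x) \<in> \<theta>" "(y, y) \<in> \<theta>"
    using p assms by (auto dest: refl_onD)
  then show "p \<in> \<theta> O \<phi> O \<theta>"
    using p xy by blast
qed

theorem mainTheorem14:
  fixes ar :: "'f \<Rightarrow> nat" and K :: "('a, 'f) alg set"
    and A B :: "('a, 'f) alg" and \<phi> \<theta> :: "'a rel"
  assumes "variety ar K" and "B \<in> K" and "full_in ar K A B"
    and "congruence ar A \<phi>"
    and "congruence ar B \<theta>" and "\<theta> \<noteq> Id_on (carrier B)"
    and "restr \<theta> (carrier A) \<subseteq> \<phi>"
  shows "\<phi> = restr (Cg ar B \<phi>) (carrier A)"
proof -
  have sub: "subalgebra ar A B" and AB: "carrier A \<subseteq> carrier B"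
    and meets: "\<And>b. b \<in> carrier B \<Longrightarrow> \<exists>a\<in>carrier A. (b, a) \<in> \<theta>"
    using assms(3,5,6) unfolding full_in_def by auto
  have "trans \<phi>" and \<phi>A: "\<phi> \<subseteq> carrier A \<times> carrier A"
    using congruenceD_equiv[OF assms(4)] by (auto elim: equivE)
  have "refl_on (carrier B) \<theta>"
    using congruenceD_equiv[OF assms(5)] by (auto elim: equivE)
  then have "\<phi> \<subseteq> \<theta> O \<phi> O \<theta>"
    using \<phi>A AB by (intro sandwich_contains) blast+
  moreover have "congruence ar B (\<theta> O \<phi> O \<theta>)"
    using sub assms(5,4) meets assms(7) by (rule sandwich_congruence)
  ultimately have "Cg ar B \<phi> \<subseteq> \<theta> O \<phi> O \<theta>"
    by (intro Cg_least)
  then have "restr (Cg ar B \<phi>) (carrier A) \<subseteq> restr (\<theta> O \<phi> O \<theta>) (carrier A)"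
    unfolding restr_def by blast
  also have "\<dots> \<subseteq> \<phi>"
    using \<open>trans \<phi>\<close> \<phi>A assms(7) by (rule restr_sandwich_subset)
  finally show ?thesis
    using Cg_upper[of \<phi> ar B] \<phi>A unfolding restr_def by blast
qed

end
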